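(* Let $r>1$ be real and let $p_m,q$ be $r$-mighty primes with $p_m>q^2$. If $n\in\mathbb{N}$ satisfies $\sigma_{-r}(n)\in\left(\sigma_{-r}(q)u_m(r),\ \sigma_{-r}(qp_m)\right)$, then $q\mid n$.
   Context: $p_m$ denotes the $m$-th prime. For $n\in\mathbb{N}$, $\sigma_{-r}(n)=\sum_{d\mid n}d^{-r}$. Let $u_m(r)=\prod_{t=m+1}^\infty\frac1{1-p_t^{-r}}$. A prime $p_m$ is $r$-mighty if $1+p_m^{-r}>u_m(r)$. *)

theory Defs
  imports "HOL-Analysis.Analysis" "HOL-Computational_Algebra.Primes"
begin

text \<open>The m-th prime, 1-indexed: nthp 1 = 2, nthp 2 = 3, ...\<close>
definition nthp :: "nat \<Rightarrow> nat" where
  "nthp m = enumerate {p. prime p} (m - 1)"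

definition sigma_neg :: "real \<Rightarrow> nat \<Rightarrow> real" where
  "sigma_neg r n = (\<Sum>d\<in>{d. d dvd n}. real d powr (- r))"

definition u :: "nat \<Rightarrow> real \<Rightarrow> real" where
  "u m r = (\<Prod>i. 1 / (1 - real (nthp (i + m + 1)) powr (- r)))"

definition mighty :: "real \<Rightarrow> nat \<Rightarrow> bool" where
  "mighty r m \<longleftrightarrow> 1 + real (nthp m) powr (- r) > u m r"

end

theory Submission
  imports Defs
begin

text \<open>
  Write \<sigma> for \<sigma>_{-r} and q for p_k, and suppose q does not divide n.
  If n has a prime factor p < q, then \<sigma>(n) \<ge> 1 + p^{-r} \<ge> 1 + (q - 1)^{-r}, and since
  p_m \<ge> q^2 this dominates (1 + q^{-r})(1 + p_m^{-r}) \<ge> \<sigma>(q p_m).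
  Otherwise every prime factor of n exceeds q, so the Euler product bounds \<sigma>(n) by
  u_k(r) < 1 + q^{-r} = \<sigma>(q) \<le> \<sigma>(q) u_m(r), the strict inequality being the mightiness of q.
  Either way \<sigma>(n) lies outside the assumed interval.
\<close>

lemma powr_neg_le_inverse:
  fixes x r :: real
  assumes "1 \<le> x" "1 \<le> r"
  shows "x powr - r \<le> 1 / x"
proof -
  have "x powr - r \<le> x powr - 1" using assms by (intro powr_mono) auto
  then show ?thesis using assms by simp
qed

lemma prod_le_prodinf_finite:
  fixes f :: "nat \<Rightarrow> real"
  assumes "convergent_prod f" "\<And>i. 1 \<le> f i" "finite J"
  shows "prod f J \<le> prodinf f"
proof (rule has_prod_le)
  show "(\<lambda>i. if i \<in> J then f i else 1) has_prod prod f J"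
    using \<open>finite J\<close> by (rule has_prod_If_finite_set)
  show "f has_prod prodinf f"
    using assms(1) by (rule convergent_prod_has_prod)
  show "0 \<le> (if i \<in> J then f i else 1) \<and> (if i \<in> J then f i else 1) \<le> f i" for i
    using assms(2)[of i] by auto
qed

lemma convergent_prod_inverse_one_minus:
  fixes x :: "nat \<Rightarrow> real"
  assumes "summable x" "\<And>i. 0 \<le> x i" "\<And>i. x i \<le> 1/2"
  shows "convergent_prod (\<lambda>i. 1 / (1 - x i))"
proof -
  have bound: "norm (1 / (1 - x i) - 1) \<le> 2 * x i" for i
  proof -
    have "0 \<le> x i" "1 / 2 \<le> 1 - x i" using assms(2,3)[of i] by auto
    then have "x i / (1 - x i) \<le> x i / (1 / 2)" by (intro divide_left_mono) auto
    moreover have "1 / (1 - x i) - 1 = x i / (1 - x i)"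
      using \<open>1 / 2 \<le> 1 - x i\<close> by (simp add: field_simps)
    ultimately show ?thesis using \<open>0 \<le> x i\<close> \<open>1 / 2 \<le> 1 - x i\<close> by simp
  qed
  have "summable (\<lambda>i. 2 * x i)"
    using assms(1) by (rule summable_mult)
  then have "summable (\<lambda>i. norm (1 / (1 - x i) - 1))"
    by (rule summable_comparison_test') (use bound in simp)
  then show ?thesis
    by (intro abs_convergent_prod_imp_convergent_prod summable_imp_abs_convergent_prod)
qed

lemma nthp_Suc: "nthp (Suc j) = enumerate {p. prime p} j"
  by (simp add: nthp_def)

lemma prime_nthp: "prime (nthp m)"
  unfolding nthp_def using enumerate_in_set[OF primes_infinite] by simp

lemma le_nthp_Suc: "j \<le> nthp (Suc j)"
  unfolding nthp_Suc using le_enumerate[OF primes_infinite] .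

lemma bij_betw_nthp_primes_above:
  assumes "k \<ge> 1"
  shows "bij_betw (\<lambda>i. nthp (i + k + 1)) UNIV {p. prime p \<and> nthp k < p}"
proof (rule bij_betw_imageI)
  let ?E = "enumerate {p :: nat. prime p}"
  have nthp_E: "nthp (i + k + 1) = ?E (i + k)" "nthp k = ?E (k - 1)" for i
    using assms by (simp_all add: nthp_def)
  have "strict_mono (\<lambda>i. nthp (i + k + 1))"
    unfolding nthp_E by (simp add: strict_mono_def primes_infinite)
  then show "inj (\<lambda>i. nthp (i + k + 1))"
    by (rule strict_mono_imp_inj_on)
  show "range (\<lambda>i. nthp (i + k + 1)) = {p. prime p \<and> nthp k < p}"
  proof (intro equalityI subsetI)
    fix p assume "p \<in> range (\<lambda>i. nthp (i + k + 1))"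
    then obtain i where i: "p = ?E (i + k)"
      unfolding nthp_E by blast
    have "?E (k - 1) < ?E (i + k)"
      using assms primes_infinite by simp
    then show "p \<in> {p. prime p \<and> nthp k < p}"
      using i enumerate_in_set[OF primes_infinite] nthp_E(2) by simp
  next
    fix p assume "p \<in> {p. prime p \<and> nthp k < p}"
    then obtain j where j: "p = ?E j" "?E (k - 1) < ?E j"
      using range_enumerate[OF primes_infinite] nthp_E(2) by (metis (mono_tags) mem_Collect_eq rangeE)
    then have "k \<le> j" using primes_infinite by simp
    then show "p \<in> range (\<lambda>i. nthp (i + k + 1))"
      using j by (intro range_eqI[of _ _ "j - k"]) (simp add: nthp_Suc)
  qed
qed

lemma nthp_powr_neg_le_half:
  assumes "r \<ge> 1"
  shows "real (nthp m) powr - r \<le> 1 / 2"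
proof -
  have "2 \<le> real (nthp m)"
    using prime_ge_2_nat[OF prime_nthp] by simp
  then have "real (nthp m) powr - r \<le> 1 / real (nthp m)"
    using assms by (intro powr_neg_le_inverse) auto
  also have "\<dots> \<le> 1 / 2"
    using \<open>2 \<le> real (nthp m)\<close> by (simp add: field_simps)
  finally show ?thesis .
qed

lemma convergent_prod_u:
  assumes "r > 1"
  shows "convergent_prod (\<lambda>i. 1 / (1 - real (nthp (i + m + 1)) powr - r))"
proof (rule convergent_prod_inverse_one_minus)
  have "summable (\<lambda>j. real (nthp (Suc j)) powr - r)"
  proof (rule summable_comparison_test')
    show "summable (\<lambda>j. real j powr - r)"
      using assms by (simp add: summable_real_powr_iff)
    show "norm (real (nthp (Suc j)) powr - r) \<le> real j powr - r" if "j \<ge> 1" for j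
      using that le_nthp_Suc[of j] assms by (simp add: powr_mono2')
  qed
  then have "summable (\<lambda>i. real (nthp (Suc (i + m))) powr - r)"
    by (subst summable_iff_shift[where f = "\<lambda>j. real (nthp (Suc j)) powr - r"])
  then show "summable (\<lambda>i. real (nthp (i + m + 1)) powr - r)"
    by simp
  show "real (nthp (i + m + 1)) powr - r \<le> 1 / 2" for i
    using assms by (intro nthp_powr_neg_le_half) simp
qed simp

lemma one_le_euler_factor_nthp:
  assumes "r \<ge> 1"
  shows "1 \<le> 1 / (1 - real (nthp j) powr - r)"
  using nthp_powr_neg_le_half[OF assms, of j] by simp

lemma prod_primes_above_le_u:
  assumes "r > 1" "k \<ge> 1" "finite P" "P \<subseteq> {p. prime p \<and> nthp k < p}"
  shows "(\<Prod>p\<in>P. 1 / (1 - real p powr - r)) \<le> u k r"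
proof -
  let ?f = "\<lambda>i. 1 / (1 - real (nthp (i + k + 1)) powr - r)"
  have bij: "bij_betw (\<lambda>i. nthp (i + k + 1)) UNIV {p. prime p \<and> nthp k < p}"
    using assms(2) by (rule bij_betw_nthp_primes_above)
  define J where "J = (\<lambda>i. nthp (i + k + 1)) -` P"
  have P_eq: "P = (\<lambda>i. nthp (i + k + 1)) ` J"
    using bij assms(4) unfolding J_def bij_betw_def by auto
  have inj: "inj_on (\<lambda>i. nthp (i + k + 1)) J"
    using bij unfolding bij_betw_def by (auto intro: inj_on_subset)
  have "finite J"
    using assms(3) inj unfolding P_eq by (simp add: finite_image_iff)
  have "(\<Prod>p\<in>P. 1 / (1 - real p powr - r)) = prod ?f J"
    unfolding P_eq using inj by (simp add: prod.reindex)
  also have "\<dots> \<le> prodinf ?f"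
  proof (rule prod_le_prodinf_finite)
    show "convergent_prod ?f" using assms(1) by (rule convergent_prod_u)
    show "1 \<le> ?f i" for i
      using assms(1) by (intro one_le_euler_factor_nthp) simp
  qed fact
  finally show ?thesis by (simp add: u_def)
qed

lemma u_ge_one:
  assumes "r > 1"
  shows "1 \<le> u m r"
  unfolding u_def
proof (rule prodinf_nonneg)
  show "(\<lambda>i. 1 / (1 - real (nthp (i + m + 1)) powr - r)) has_prod u m r"
    unfolding u_def using convergent_prod_u[OF assms] by (rule convergent_prod_has_prod)
  show "1 \<le> 1 / (1 - real (nthp (i + m + 1)) powr - r)" for i
    using assms by (intro one_le_euler_factor_nthp) simp
qed

lemma sigma_neg_nonneg: "0 \<le> sigma_neg r n"
  unfolding sigma_neg_def by (intro sum_nonneg) auto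

lemma sigma_neg_prime:
  assumes "prime p"
  shows "sigma_neg r p = 1 + real p powr - r"
proof -
  have "{d. d dvd p} = {1, p}" "p \<noteq> 1"
    using assms by (auto simp: prime_nat_iff)
  then show ?thesis unfolding sigma_neg_def by simp
qed

lemma sigma_neg_mono_dvd:
  assumes "n > 0" "d dvd n"
  shows "sigma_neg r d \<le> sigma_neg r n"
  unfolding sigma_neg_def
  by (rule sum_mono2) (use assms dvd_trans in auto)

lemma sigma_neg_mult_le:
  assumes "a > 0" "b > 0"
  shows "sigma_neg r (a * b) \<le> sigma_neg r a * sigma_neg r b"
proof -
  let ?g = "\<lambda>d::nat. real d powr - r"
  let ?A = "{d. d dvd a}" and ?B = "{d. d dvd b}"
  have fin: "finite ?A" "finite ?B"
    using assms by auto
  have "{d. d dvd a * b} \<subseteq> (\<lambda>(x, y). x * y) ` (?A \<times> ?B)"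
    by (auto dest!: division_decomp)
  then have "sigma_neg r (a * b) \<le> sum ?g ((\<lambda>(x, y). x * y) ` (?A \<times> ?B))"
    unfolding sigma_neg_def by (intro sum_mono2) (use fin in auto)
  also have "\<dots> \<le> sum (?g \<circ> (\<lambda>(x, y). x * y)) (?A \<times> ?B)"
    by (rule sum_image_le) (use fin in auto)
  also have "\<dots> = (\<Sum>x\<in>?A. \<Sum>y\<in>?B. ?g x * ?g y)"
    by (subst sum.cartesian_product) (auto simp: powr_mult intro!: sum.cong)
  also have "\<dots> = sigma_neg r a * sigma_neg r b"
    unfolding sigma_neg_def by (simp add: sum_product)
  finally show ?thesis .
qed

lemma sigma_neg_prod_le:
  assumes "finite P" "\<And>p. p \<in> P \<Longrightarrow> g p > 0"
  shows "sigma_neg r (\<Prod>p\<in>P. g p) \<le> (\<Prod>p\<in>P. sigma_neg r (g p))"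
  using assms
proof (induction P rule: finite_induct)
  case empty
  have "{d :: nat. d dvd 1} = {1}" by auto
  then show ?case unfolding sigma_neg_def by simp
next
  case (insert x F)
  have "sigma_neg r (\<Prod>p\<in>insert x F. g p) = sigma_neg r (g x * (\<Prod>p\<in>F. g p))"
    using insert by simp
  also have "\<dots> \<le> sigma_neg r (g x) * sigma_neg r (\<Prod>p\<in>F. g p)"
    using insert by (intro sigma_neg_mult_le) (auto intro: prod_pos)
  also have "\<dots> \<le> sigma_neg r (g x) * (\<Prod>p\<in>F. sigma_neg r (g p))"
    using insert by (intro mult_left_mono sigma_neg_nonneg) auto
  also have "\<dots> = (\<Prod>p\<in>insert x F. sigma_neg r (g p))"
    using insert by simp
  finally show ?case .
qed

lemma sigma_neg_prime_power_le:
  assumes "prime p" "r > 0"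
  shows "sigma_neg r (p ^ e) \<le> 1 / (1 - real p powr - r)"
proof -
  define x where "x = real p powr - r"
  have p: "real p > 1"
    using prime_gt_1_nat[OF assms(1)] by simp
  have x: "0 < x" "x < 1"
    unfolding x_def using p assms(2) by (auto intro: powr_less_one)
  have "{d. d dvd p ^ e} = (\<lambda>i. p ^ i) ` {..e}"
    using divides_primepow_nat[OF assms(1)] by auto
  then have "sigma_neg r (p ^ e) \<le> (\<Sum>i\<le>e. real (p ^ i) powr - r)"
    unfolding sigma_neg_def using sum_image_le[of "{..e}" "\<lambda>d. real d powr - r" "\<lambda>i. p ^ i"] by simp
  also have "\<dots> = (\<Sum>i<Suc e. x ^ i)"
    unfolding x_def lessThan_Suc_atMost using p by (simp add: powr_realpow[symmetric] powr_powr mult.commute)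
  also have "\<dots> = (1 - x ^ Suc e) / (1 - x)"
    unfolding sum_gp_strict using x by simp
  also have "\<dots> \<le> 1 / (1 - x)"
    using x by (intro divide_right_mono) auto
  finally show ?thesis unfolding x_def .
qed

lemma sigma_neg_le_euler_product:
  assumes "n > 0" "r > 0"
  shows "sigma_neg r n \<le> (\<Prod>p\<in>prime_factors n. 1 / (1 - real p powr - r))"
proof -
  have "sigma_neg r n = sigma_neg r (\<Prod>p\<in>prime_factors n. p ^ multiplicity p n)"
    using prod_prime_factors[of n] assms by simp
  also have "\<dots> \<le> (\<Prod>p\<in>prime_factors n. sigma_neg r (p ^ multiplicity p n))"
    by (rule sigma_neg_prod_le) (auto simp: prime_gt_0_nat in_prime_factors_iff)
  also have "\<dots> \<le> (\<Prod>p\<in>prime_factors n. 1 / (1 - real p powr - r))"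
    by (intro prod_mono conjI sigma_neg_nonneg sigma_neg_prime_power_le)
      (use assms in \<open>auto simp: in_prime_factors_iff\<close>)
  finally show ?thesis .
qed

lemma sigma_neg_le_u:
  assumes "r > 1" "k \<ge> 1" "n > 0" "\<And>p. p \<in> prime_factors n \<Longrightarrow> nthp k < p"
  shows "sigma_neg r n \<le> u k r"
proof -
  have "sigma_neg r n \<le> (\<Prod>p\<in>prime_factors n. 1 / (1 - real p powr - r))"
    using assms by (intro sigma_neg_le_euler_product) auto
  also have "\<dots> \<le> u k r"
    using assms by (intro prod_primes_above_le_u) auto
  finally show ?thesis .
qed

lemma one_plus_powr_neg_mult_le_pred:
  fixes Q M r :: real
  assumes "1 < Q" "Q\<^sup>2 \<le> M" "1 \<le> r"
  shows "(1 + Q powr - r) * (1 + M powr - r) \<le> 1 + (Q - 1) powr - r"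
proof -
  \<comment> \<open>(Q - 1)^{-r} \<ge> B Q/(Q - 1) and M^{-r} \<le> B Q/M reduce the claim to (Q + 1)(Q - 1) \<le> M.\<close>
  define B where "B = Q powr - r"
  have "Q \<le> Q\<^sup>2"
    using power_increasing[of 1 2 Q] assms by simp
  then have M: "0 < M" "Q \<le> M"
    using assms by linarith+
  have B: "0 < B" "B \<le> 1 / Q"
    unfolding B_def using assms by (auto intro: powr_neg_le_inverse)
  have "Q / (Q - 1) \<le> (Q / (Q - 1)) powr r"
    using powr_mono[of 1 r "Q / (Q - 1)"] assms by simp
  then have "B * (Q / (Q - 1)) \<le> B * (Q / (Q - 1)) powr r"
    using B by (intro mult_left_mono) auto
  also have "\<dots> = (Q - 1) powr - r"
    unfolding B_def using assms by (simp add: powr_divide powr_minus field_simps)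
  finally have pred: "B * (Q / (Q - 1)) \<le> (Q - 1) powr - r" .
  have "(Q / M) powr r \<le> Q / M"
    using powr_mono'[of 1 r "Q / M"] assms M by simp
  then have "B * (Q / M) powr r \<le> B * (Q / M)"
    using B by (intro mult_left_mono) auto
  also have "B * (Q / M) powr r = M powr - r"
    unfolding B_def using assms M by (simp add: powr_divide powr_minus field_simps)
  finally have large: "M powr - r \<le> B * (Q / M)" .
  have "(Q + 1) * (Q - 1) \<le> M"
    using assms by (simp add: power2_eq_square algebra_simps)
  then have "(Q + 1) / M \<le> (Q + 1) / ((Q + 1) * (Q - 1))"
    using assms M(1) by (intro divide_left_mono mult_pos_pos) auto
  then have frac: "(Q + 1) / M \<le> 1 / (Q - 1)"
    using assms by simp
  have "(1 + B) * (1 + M powr - r) = 1 + B + (1 + B) * M powr - r"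
    by (simp add: algebra_simps)
  also have "\<dots> \<le> 1 + B + (1 + 1 / Q) * (B * (Q / M))"
    using B large by (intro add_left_mono mult_mono) auto
  also have "\<dots> = 1 + B + B * ((Q + 1) / M)"
    using assms M by (simp add: field_simps)
  also have "\<dots> \<le> 1 + B + B * (1 / (Q - 1))"
    using frac B by (intro add_left_mono mult_left_mono) auto
  also have "\<dots> = 1 + B * (Q / (Q - 1))"
    using assms by (simp add: field_simps)
  also have "\<dots> \<le> 1 + (Q - 1) powr - r"
    using pred by simp
  finally show ?thesis unfolding B_def .
qed

lemma sigma_neg_prime_mult_le_of_small_prime_dvd:
  assumes "r \<ge> 1" "prime q" "prime M" "q\<^sup>2 \<le> M"
    and "n > 0" "prime p" "p dvd n" "p < q"
  shows "sigma_neg r (q * M) \<le> sigma_neg r n"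
proof -
  have "sigma_neg r (q * M) \<le> sigma_neg r q * sigma_neg r M"
    using assms(2,3) by (intro sigma_neg_mult_le) (auto simp: prime_gt_0_nat)
  also have "\<dots> = (1 + real q powr - r) * (1 + real M powr - r)"
    using assms(2,3) by (simp add: sigma_neg_prime)
  also have "\<dots> \<le> 1 + (real q - 1) powr - r"
  proof (rule one_plus_powr_neg_mult_le_pred)
    show "1 < real q" using prime_gt_1_nat[OF assms(2)] by simp
    show "(real q)\<^sup>2 \<le> real M" using assms(4) by (simp flip: of_nat_power)
  qed fact
  also have "\<dots> \<le> 1 + real p powr - r"
    using assms(1,6,8) prime_gt_0_nat[OF assms(6)] by (simp add: powr_mono2')
  also have "\<dots> = sigma_neg r p"
    using assms(6) by (simp add: sigma_neg_prime)
  also have "\<dots> \<le> sigma_neg r n"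
    using assms(5,7) by (rule sigma_neg_mono_dvd)
  finally show ?thesis .
qed

theorem mainTheorem6:
  fixes r :: real and m k n :: nat
  assumes "r > 1"
    and "m \<ge> 1" and "mighty r m"
    and "k \<ge> 1" and "mighty r k"
    and "nthp m > (nthp k)^2"
    and "n > 0"
    and "sigma_neg r n > sigma_neg r (nthp k) * u m r"
    and "sigma_neg r n < sigma_neg r (nthp k * nthp m)"
  shows "nthp k dvd n"
proof (rule ccontr)
  assume not_dvd: "\<not> nthp k dvd n"
  show False
  proof (cases "\<exists>p. prime p \<and> p dvd n \<and> p < nthp k")
    case True
    then obtain p where "prime p" "p dvd n" "p < nthp k" by blast
    then have "sigma_neg r (nthp k * nthp m) \<le> sigma_neg r n"
      using assms(1,6,7) prime_nthp
      by (intro sigma_neg_prime_mult_le_of_small_prime_dvd) auto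
    with assms(9) show False by simp
  next
    case False
    then have "nthp k < p" if "p \<in> prime_factors n" for p
      using that not_dvd by (metis in_prime_factors_iff linorder_neqE_nat)
    then have "sigma_neg r n \<le> u k r"
      by (rule sigma_neg_le_u[OF assms(1,4,7)])
    also have "\<dots> < sigma_neg r (nthp k)"
      using assms(5) by (simp add: mighty_def sigma_neg_prime prime_nthp)
    also have "\<dots> \<le> sigma_neg r (nthp k) * u m r"
      using mult_left_mono[OF u_ge_one[OF assms(1)] sigma_neg_nonneg] by simp
    finally show False using assms(8) by simp
  qed
qed

end
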